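(* Let $P(t,q)=\log\big(\sum_{n=1}^\infty 2^{-nt}e^{2^nq}\big)$ and $D_1=\{(t,q):t\ge0,\ q<0\}$. For $(t,q)\in D_1$, $$\frac{\partial P}{\partial q}(t,q)=\frac{\sum_{n\ge1}2^{-n(t-1)}e^{2^nq}}{\sum_{n\ge1}2^{-nt}e^{2^nq}}.$$ Consequently: (1) for fixed $0<t\le1$, $\lim_{q\to0^-}\frac{\partial P}{\partial q}(t,q)=\infty$; (2) $\lim_{(t,q)\to(0,0)}\frac{\partial P}{\partial q}(t,q)=\infty$ (with $(t,q)\in D_1$); (3) for $t\ge0$ and $q<0$, $\frac{\partial P}{\partial q}(t,q)>2$, and for fixed $t\ge0$, $\lim_{q\to-\infty}\frac{\partial P}{\partial q}(t,q)=2$. *)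

theory Defs
  imports "HOL-Analysis.Analysis"
begin

text \<open>The series sum_{n>=1} 2^(-n t) e^(2^n q), indexed by Suc n so that n runs over 1,2,3,...\<close>
definition Zsum :: "real \<Rightarrow> real \<Rightarrow> real" where
  "Zsum t q = (\<Sum>n. 2 powr (- real (Suc n) * t) * exp (2 ^ Suc n * q))"

definition P :: "real \<Rightarrow> real \<Rightarrow> real" where
  "P t q = ln (Zsum t q)"

definition Zsum1 :: "real \<Rightarrow> real \<Rightarrow> real" where
  "Zsum1 t q = (\<Sum>n. 2 powr (- real (Suc n) * (t - 1)) * exp (2 ^ Suc n * q))"

definition dPdq :: "real \<Rightarrow> real \<Rightarrow> real" where
  "dPdq t q = deriv (\<lambda>q'. P t q') q"

definition D1 :: "(real \<times> real) set" where
  "D1 = {(t, q). t \<ge> 0 \<and> q < 0}"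

end

theory Submission
  imports Defs "HOL-Real_Asymp.Real_Asymp"
begin

(* Write Z(t,q) for the series of the terms 2^(-nt) e^(2^n q), n >= 1. Multiplying the n-th term
   by 2^n shifts t to t - 1, so the numerator series is Z(t-1,q) and dP/dq = Z(t-1,q)/Z(t,q) is a
   weighted mean of the numbers 2^n >= 2; termwise differentiation is justified by the doubly
   exponential decay of e^(2^n q) for q < 0.
   The mean exceeds 2. For t >= 0 the n-th term is at most e^((2^n - 2) q) times the first one, and
   x e^(-x) <= 4/x, so the excess over 2 is bounded by a geometric series summing to 8/q^2.
   As q -> 0 the n-th term tends to 2^(-nt). For 0 < t <= 1 the series Z(t,.) stays below the
   geometric sum Z(t,0), while the terms of Z(t-1,.) tend to values >= 1, so Z(t-1,q) diverges.
   Near (0,0) the series Z(t,q) itself diverges; its first N terms carry mass at most N and all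
   later terms have weight >= 2^N, so the mean is at least 2^N (1 - N/Z(t,q)). *)

lemma power2_le_4_exp:
  fixes x :: real
  assumes "x \<ge> 0"
  shows "x\<^sup>2 \<le> 4 * exp x"
proof -
  have "x/2 \<le> exp (x/2)"
    using exp_ge_add_one_self [of "x/2"] by linarith
  then have "(x/2)\<^sup>2 \<le> exp (x/2) ^ 2"
    using assms by (intro power_mono) auto
  also have "exp (x/2) ^ 2 = exp x"
    by (simp add: exp_double [symmetric])
  finally show ?thesis
    by (simp add: power_divide)
qed

lemma mult_exp_mult_le:
  fixes c q :: real
  assumes "c > 0" "q < 0"
  shows "c * exp (c * q) \<le> 4 / (c * q\<^sup>2)"
proof -
  have "(c * q)\<^sup>2 \<le> 4 * exp (- (c * q))"
    using power2_le_4_exp [of "- (c * q)"] mult_pos_neg [OF assms] by simp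
  then have "(c * q)\<^sup>2 * exp (c * q) \<le> 4 * exp (- (c * q)) * exp (c * q)"
    by (rule mult_right_mono) simp
  also have "\<dots> = 4"
    by (simp add: exp_minus_inverse mult.assoc [symmetric] mult.commute [of "exp (- (c * q))"])
  finally have "(c * q)\<^sup>2 * exp (c * q) \<le> 4" .
  moreover have "0 < c * q\<^sup>2"
    using assms by simp
  ultimately show ?thesis
    by (simp add: pos_le_divide_eq power2_eq_square mult_ac)
qed

definition zterm :: "real \<Rightarrow> real \<Rightarrow> nat \<Rightarrow> real" where
  "zterm t q n = 2 powr (- real (Suc n) * t) * exp (2 ^ Suc n * q)"

lemma Zsum_eq_suminf: "Zsum t q = suminf (zterm t q)"
  by (simp add: Zsum_def zterm_def [abs_def])

lemma Zsum1_eq_Zsum: "Zsum1 t q = Zsum (t - 1) q"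
  by (simp add: Zsum1_def Zsum_def)

lemma zterm_pos: "zterm t q n > 0"
  by (simp add: zterm_def)

lemma zterm_Suc: "zterm t q (Suc n) = 2 powr (- t) * exp (2 ^ Suc n * q) * zterm t q n"
proof -
  have "- real (Suc (Suc n)) * t = - t + - real (Suc n) * t"
    by (simp add: algebra_simps)
  then have "2 powr (- real (Suc (Suc n)) * t) = 2 powr (- t) * 2 powr (- real (Suc n) * t)"
    by (simp only: powr_add)
  moreover have "exp (2 ^ Suc (Suc n) * q) = exp (2 ^ Suc n * q) * exp (2 ^ Suc n * q)"
    by (simp add: exp_add [symmetric])
  ultimately show ?thesis
    by (simp add: zterm_def)
qed

lemma zterm_diff_one: "zterm (t - 1) q n = 2 ^ Suc n * zterm t q n"
proof -
  have "- real (Suc n) * (t - 1) = real (Suc n) + - real (Suc n) * t"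
    by (simp add: algebra_simps)
  then have "2 powr (- real (Suc n) * (t - 1)) = 2 powr real (Suc n) * 2 powr (- real (Suc n) * t)"
    by (simp only: powr_add)
  also have "2 powr real (Suc n) = (2::real) ^ Suc n"
    by (rule powr_realpow) simp
  finally show ?thesis
    by (simp add: zterm_def)
qed

lemma zterm_mono: "q \<le> q' \<Longrightarrow> zterm t q n \<le> zterm t q' n"
  by (simp add: zterm_def)

lemma zterm_le_one:
  assumes "t \<ge> 0" "q \<le> 0"
  shows "zterm t q n \<le> 1"
proof -
  have "2 powr (- real (Suc n) * t) \<le> 2 powr 0"
    using assms by (intro powr_mono) (auto simp: mult_nonpos_nonneg)
  moreover have "exp (2 ^ Suc n * q) \<le> 1"
    using assms by (simp add: mult_nonneg_nonpos)
  ultimately show ?thesis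
    unfolding zterm_def by (intro mult_le_one) auto
qed

lemma summable_zterm:
  assumes "q < 0"
  shows "summable (zterm t q)"
proof -
  have "(\<lambda>n. exp (2 ^ Suc n * q)) \<longlonglongrightarrow> 0"
    using assms by real_asymp
  then have "\<forall>\<^sub>F n in sequentially. exp (2 ^ Suc n * q) < 1 / (2 * 2 powr (- t))"
    by (rule order_tendstoD(2)) simp
  then obtain N where N: "\<And>n. n \<ge> N \<Longrightarrow> exp (2 ^ Suc n * q) < 1 / (2 * 2 powr (- t))"
    by (auto simp: eventually_sequentially)
  show ?thesis
  proof (rule summable_ratio_test [of "1/2" N])
    fix n assume "n \<ge> N"
    then have "2 powr (- t) * exp (2 ^ Suc n * q) \<le> 1/2"
      using N [of n] by (simp add: field_simps)
    then show "norm (zterm t q (Suc n)) \<le> 1/2 * norm (zterm t q n)"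
      using zterm_pos [of t q n] by (simp add: zterm_Suc mult_right_mono)
  qed simp
qed

lemma zterm_sums_Zsum: "q < 0 \<Longrightarrow> zterm t q sums Zsum t q"
  by (simp add: Zsum_eq_suminf summable_zterm summable_sums)

lemma sum_zterm_le_Zsum: "q < 0 \<Longrightarrow> (\<Sum>n<K. zterm t q n) \<le> Zsum t q"
  unfolding Zsum_eq_suminf by (intro sum_le_suminf summable_zterm) (auto intro: less_imp_le zterm_pos)

lemma Zsum_pos: "q < 0 \<Longrightarrow> Zsum t q > 0"
  unfolding Zsum_eq_suminf by (intro suminf_pos summable_zterm zterm_pos)

lemma has_field_derivative_Zsum:
  assumes q: "q < 0"
  shows "(Zsum t has_field_derivative Zsum (t - 1) q) (at q)"
proof -
  define S where "S = {..<q/2}"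
  have q_in_S: "q \<in> S" and "open S" and "convex S"
    using q by (auto simp: S_def)
  have "\<exists>g. \<forall>x\<in>S. zterm t x sums g x \<and>
      (g has_field_derivative (\<Sum>n. zterm (t - 1) x n)) (at x within S)"
  proof (rule has_field_derivative_series [where f = "\<lambda>n x. zterm t x n"])
    fix n x
    show "((\<lambda>x. zterm t x n) has_field_derivative zterm (t - 1) x n) (at x within S)"
      unfolding zterm_diff_one unfolding zterm_def by (auto intro!: derivative_eq_intros)
  next
    show "uniform_limit S (\<lambda>n x. \<Sum>i<n. zterm (t - 1) x i) (\<lambda>x. \<Sum>n. zterm (t - 1) x n) sequentially"
    proof (rule Weierstrass_m_test)
      show "summable (zterm (t - 1) (q/2))"
        using q by (intro summable_zterm) simp
      fix n x assume "x \<in> S"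
      then show "norm (zterm (t - 1) x n) \<le> zterm (t - 1) (q/2) n"
        using zterm_pos [of "t - 1" x n] by (simp add: S_def zterm_mono)
    qed
  qed (use q_in_S q \<open>convex S\<close> summable_zterm in auto)
  then obtain g where g: "\<And>x. x \<in> S \<Longrightarrow> zterm t x sums g x \<and>
      (g has_field_derivative (\<Sum>n. zterm (t - 1) x n)) (at x within S)"
    by blast
  have "(g has_field_derivative Zsum (t - 1) q) (at q)"
    using g [OF q_in_S] at_within_open [OF q_in_S \<open>open S\<close>] by (simp add: Zsum_eq_suminf)
  moreover have "g x = Zsum t x" if "x \<in> S" for x
    using g [OF that] by (simp add: Zsum_eq_suminf sums_iff)
  ultimately show ?thesis
    by (rule has_field_derivative_transform_within_open [OF _ \<open>open S\<close> q_in_S])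
qed

lemma has_real_derivative_P:
  assumes "q < 0"
  shows "(P t has_real_derivative Zsum (t - 1) q / Zsum t q) (at q)"
proof -
  have "((\<lambda>q. ln (Zsum t q)) has_real_derivative 1 / Zsum t q * Zsum (t - 1) q) (at q)"
    using assms by (intro DERIV_chain2 [OF DERIV_ln_divide] has_field_derivative_Zsum Zsum_pos)
  then show ?thesis
    by (simp add: P_def [abs_def])
qed

lemma dPdq_eq: "q < 0 \<Longrightarrow> dPdq t q = Zsum (t - 1) q / Zsum t q"
  unfolding dPdq_def by (intro DERIV_imp_deriv has_real_derivative_P)

lemma sums_Zsum_diff_one_minus_double:
  assumes "q < 0"
  shows "(\<lambda>n. (2 ^ Suc n - 2) * zterm t q n) sums (Zsum (t - 1) q - 2 * Zsum t q)"
proof -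
  have "(\<lambda>n. zterm (t - 1) q n - 2 * zterm t q n) sums (Zsum (t - 1) q - 2 * Zsum t q)"
    using assms by (intro sums_diff sums_mult zterm_sums_Zsum)
  then show ?thesis
    by (simp add: zterm_diff_one left_diff_distrib)
qed

lemma dPdq_gt_2:
  assumes "q < 0"
  shows "dPdq t q > 2"
proof -
  have "0 < (\<Sum>n. (2 ^ Suc n - 2) * zterm t q n)"
  proof (rule suminf_pos2 [where i = 1])
    show "summable (\<lambda>n. (2 ^ Suc n - 2) * zterm t q n)"
      using sums_Zsum_diff_one_minus_double [OF assms] by (rule sums_summable)
    show "0 \<le> (2 ^ Suc n - 2) * zterm t q n" for n
      using zterm_pos [of t q n] one_le_power [of "2::real" n] by simp
  qed (simp add: zterm_pos)
  then have "2 * Zsum t q < Zsum (t - 1) q"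
    using sums_unique [OF sums_Zsum_diff_one_minus_double [OF assms, of t]] by linarith
  with Zsum_pos [OF assms] show ?thesis
    by (simp add: dPdq_eq [OF assms] field_simps)
qed

lemma zterm_le_exp_mult_zterm_0:
  assumes "t \<ge> 0"
  shows "zterm t q n \<le> exp ((2 ^ Suc n - 2) * q) * zterm t q 0"
proof -
  have "2 powr (- real (Suc n) * t) \<le> 2 powr (- t)"
    using assms by (intro powr_mono) (simp_all add: algebra_simps)
  then have "zterm t q n \<le> 2 powr (- t) * exp (2 ^ Suc n * q)"
    by (simp add: zterm_def)
  also have "\<dots> = exp ((2 ^ Suc n - 2) * q) * zterm t q 0"
    by (simp add: zterm_def left_diff_distrib exp_diff)
  finally show ?thesis .
qed

lemma weighted_zterm_le:
  assumes "t \<ge> 0" "q < 0"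
  shows "(2 ^ Suc n - 2) * zterm t q n \<le> 4 / q\<^sup>2 * (1/2) ^ n * zterm t q 0"
proof (cases n)
  case 0
  then show ?thesis
    using zterm_pos [of t q 0] by simp
next
  case (Suc m)
  define c :: real where "c = 2 ^ Suc n - 2"
  have "c \<ge> 2 ^ n"
    using Suc by (simp add: c_def)
  then have c_pos: "c > 0"
    using zero_less_power [of "2::real" n] by linarith
  have "c * zterm t q n \<le> c * exp (c * q) * zterm t q 0"
    using zterm_le_exp_mult_zterm_0 [OF assms(1)] c_pos by (simp add: c_def mult_left_mono)
  also have "\<dots> \<le> 4 / (c * q\<^sup>2) * zterm t q 0"
    using mult_exp_mult_le [OF c_pos assms(2)] zterm_pos [of t q 0] by (intro mult_right_mono) auto
  also have "\<dots> \<le> 4 / (2 ^ n * q\<^sup>2) * zterm t q 0"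
    using \<open>c \<ge> 2 ^ n\<close> c_pos assms(2) zterm_pos [of t q 0]
    by (intro mult_right_mono divide_left_mono mult_right_mono) auto
  finally show ?thesis
    by (simp add: c_def power_one_over field_simps)
qed

lemma dPdq_le:
  assumes "t \<ge> 0" "q < 0"
  shows "dPdq t q \<le> 2 + 8 / q\<^sup>2"
proof -
  define D where "D = Zsum (t - 1) q - 2 * Zsum t q"
  have "(\<lambda>n. 4 / q\<^sup>2 * (1/2) ^ n * zterm t q 0) sums (4 / q\<^sup>2 * 2 * zterm t q 0)"
    using geometric_sums [of "1/2::real"] by (intro sums_mult2 sums_mult) auto
  then have D_le: "D \<le> 8 / q\<^sup>2 * zterm t q 0"
    using sums_le [OF weighted_zterm_le [OF assms] sums_Zsum_diff_one_minus_double [OF assms(2)]]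
    by (simp add: D_def)
  have "D > 0"
    using dPdq_gt_2 [OF assms(2)] Zsum_pos [OF assms(2)]
    by (simp add: D_def dPdq_eq [OF assms(2)] field_simps)
  have zterm_0_le: "zterm t q 0 \<le> Zsum t q"
    using sum_zterm_le_Zsum [OF assms(2), of t 1] by simp
  have "dPdq t q - 2 = D / Zsum t q"
    using Zsum_pos [OF assms(2), of t] by (simp add: dPdq_eq [OF assms(2)] D_def diff_divide_distrib)
  also have "\<dots> \<le> D / zterm t q 0"
    using zterm_0_le \<open>D > 0\<close> zterm_pos [of t q 0] Zsum_pos [OF assms(2), of t] by (intro divide_left_mono) auto
  also have "\<dots> \<le> 8 / q\<^sup>2"
    using D_le zterm_pos [of t q 0] by (simp add: divide_le_eq)
  finally show ?thesis
    by simp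
qed

lemma tendsto_dPdq_at_bot:
  assumes "t \<ge> 0"
  shows "(dPdq t \<longlongrightarrow> 2) at_bot"
proof (rule tendsto_sandwich [where f = "\<lambda>_. 2" and h = "\<lambda>q. 2 + 8 / q\<^sup>2"])
  have neg: "\<forall>\<^sub>F q in at_bot. q < (0::real)"
    by (rule eventually_gt_at_bot)
  show "\<forall>\<^sub>F q in at_bot. 2 \<le> dPdq t q"
    using neg by eventually_elim (simp add: dPdq_gt_2 less_imp_le)
  show "\<forall>\<^sub>F q in at_bot. dPdq t q \<le> 2 + 8 / q\<^sup>2"
    using neg by eventually_elim (simp add: dPdq_le [OF assms])
  show "((\<lambda>q::real. 2 + 8 / q\<^sup>2) \<longlongrightarrow> 2) at_bot"
    by real_asymp
qed simp

lemma filterlim_Zsum_at_top: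
  assumes "s \<le> 0" and "(T \<longlongrightarrow> s) F" and "(Q \<longlongrightarrow> 0) F"
    and neg: "\<forall>\<^sub>F x in F. Q x < 0"
  shows "filterlim (\<lambda>x. Zsum (T x) (Q x)) at_top F"
proof (subst filterlim_at_top, intro allI)
  fix M :: real
  define K where "K = Suc (nat \<lceil>M\<rceil>)"
  have "((\<lambda>x. \<Sum>n<K. zterm (T x) (Q x) n) \<longlongrightarrow> (\<Sum>n<K. zterm s 0 n)) F"
    unfolding zterm_def using assms by (intro tendsto_intros) auto
  moreover have "M < (\<Sum>n<K. zterm s 0 n)"
  proof -
    have "1 \<le> zterm s 0 n" for n
    proof -
      have "2 powr 0 \<le> 2 powr (- real (Suc n) * s)"
        using assms(1) by (intro powr_mono) (auto simp: mult_nonpos_nonpos)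
      then show ?thesis
        by (simp add: zterm_def)
    qed
    then have "real K \<le> (\<Sum>n<K. zterm s 0 n)"
      using sum_mono [of "{..<K}" "\<lambda>_. 1" "zterm s 0"] by simp
    moreover have "M < real K"
      by (simp add: K_def) linarith
    ultimately show ?thesis
      by linarith
  qed
  ultimately have "\<forall>\<^sub>F x in F. M < (\<Sum>n<K. zterm (T x) (Q x) n)"
    by (rule order_tendstoD(1))
  with neg show "\<forall>\<^sub>F x in F. M \<le> Zsum (T x) (Q x)"
  proof eventually_elim
    case (elim x)
    then show ?case
      using sum_zterm_le_Zsum [OF elim(1), of "T x" K] by linarith
  qed
qed

lemma Zsum_le_Zsum_0:
  assumes "t > 0" "q < 0"
  shows "Zsum t q \<le> Zsum t 0"
proof -
  have summable_0: "summable (zterm t 0)"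
  proof (rule summable_ratio_test [of "2 powr (- t)" 0])
    show "2 powr (- t) < 1"
      using powr_less_mono [of "- t" 0 2] assms(1) by simp
    show "norm (zterm t 0 (Suc n)) \<le> 2 powr (- t) * norm (zterm t 0 n)" for n
      using zterm_pos [of t 0 n] by (simp add: zterm_Suc)
  qed
  show ?thesis
    unfolding Zsum_eq_suminf
    using assms(2) by (intro suminf_le [OF _ summable_zterm summable_0] zterm_mono) auto
qed

lemma filterlim_dPdq_at_left_0:
  assumes "0 < t" "t \<le> 1"
  shows "filterlim (dPdq t) at_top (at_left 0)"
proof -
  have neg: "\<forall>\<^sub>F q in at_left 0. q < (0::real)"
    by (simp add: eventually_at_filter)
  have "filterlim (\<lambda>q. Zsum (t - 1) q) at_top (at_left 0)"
    by (rule filterlim_Zsum_at_top [where s = "t - 1" and T = "\<lambda>_. t - 1" and Q = "\<lambda>q. q"])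
      (use assms neg in \<open>auto intro: tendsto_ident_at\<close>)
  then have "filterlim (\<lambda>q. 1 / Zsum t 0 * Zsum (t - 1) q) at_top (at_left 0)"
    using Zsum_le_Zsum_0 [OF assms(1), of "-1"] Zsum_pos [of "-1" t]
    by (intro filterlim_tendsto_pos_mult_at_top [OF tendsto_const]) auto
  moreover have "\<forall>\<^sub>F q in at_left 0. 1 / Zsum t 0 * Zsum (t - 1) q \<le> dPdq t q"
    using neg
  proof eventually_elim
    case (elim q)
    then show ?case
      using Zsum_le_Zsum_0 [OF assms(1) elim] Zsum_pos [OF elim, of t] Zsum_pos [OF elim, of "t - 1"]
      by (simp add: dPdq_eq [OF elim] divide_left_mono mult_pos_pos)
  qed
  ultimately show ?thesis
    by (rule filterlim_at_top_mono)
qed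

lemma Zsum_diff_one_ge:
  assumes "t \<ge> 0" "q < 0"
  shows "2 ^ N * (Zsum t q - N) \<le> Zsum (t - 1) q"
proof (rule sums_le)
  have "(\<lambda>n. zterm t q n - (if n \<in> {..<N} then 1 else 0)) sums (Zsum t q - (\<Sum>n<N. 1))"
    using assms(2) by (intro sums_diff zterm_sums_Zsum sums_If_finite_set) auto
  then show "(\<lambda>n. 2 ^ N * (zterm t q n - (if n \<in> {..<N} then 1 else 0))) sums (2 ^ N * (Zsum t q - N))"
    by (intro sums_mult) simp
  show "zterm (t - 1) q sums Zsum (t - 1) q"
    using assms(2) by (rule zterm_sums_Zsum)
  fix n
  show "2 ^ N * (zterm t q n - (if n \<in> {..<N} then 1 else 0)) \<le> zterm (t - 1) q n"
  proof (cases "n < N")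
    case True
    have "2 ^ N * (zterm t q n - 1) \<le> 0"
      using zterm_le_one [OF assms(1), of q n] assms(2) by (simp add: mult_nonneg_nonpos)
    with True show ?thesis
      using zterm_pos [of "t - 1" q n] by simp
  next
    case False
    then have "(2::real) ^ N \<le> 2 ^ Suc n"
      by (intro power_increasing) auto
    then show ?thesis
      using False zterm_pos [of t q n] by (simp add: zterm_diff_one mult_right_mono)
  qed
qed

lemma dPdq_ge_if_Zsum_ge:
  assumes "t \<ge> 0" "q < 0" "2 * real N \<le> Zsum t q"
  shows "2 ^ N / 2 \<le> dPdq t q"
proof -
  have "2 ^ N * (Zsum t q / 2) \<le> 2 ^ N * (Zsum t q - N)"
    using assms(3) by (intro mult_left_mono) auto
  also have "\<dots> \<le> Zsum (t - 1) q"
    using assms(1,2) by (rule Zsum_diff_one_ge)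
  finally show ?thesis
    using Zsum_pos [OF assms(2), of t] by (simp add: dPdq_eq [OF assms(2)] field_simps)
qed

lemma filterlim_dPdq_at_origin:
  "filterlim (\<lambda>(t, q). dPdq t q) at_top (at (0, 0) within D1)"
proof (subst filterlim_at_top, intro allI)
  fix M :: real
  obtain N :: nat where N: "2 * M < 2 ^ N"
    using real_arch_pow [of 2 "2 * M"] by auto
  have in_D1: "\<forall>\<^sub>F x in at (0, 0) within D1. x \<in> D1"
    by (simp add: eventually_at_filter)
  have "filterlim (\<lambda>x. Zsum (fst x) (snd x)) at_top (at (0, 0) within D1)"
  proof (rule filterlim_Zsum_at_top)
    show "\<forall>\<^sub>F x in at (0, 0) within D1. snd x < 0"
      using in_D1 by eventually_elim (auto simp: D1_def)
  qed (auto intro!: tendsto_eq_intros)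
  then have "\<forall>\<^sub>F x in at (0, 0) within D1. 2 * real N \<le> Zsum (fst x) (snd x)"
    by (simp add: filterlim_at_top)
  with in_D1 show "\<forall>\<^sub>F x in at (0, 0) within D1. M \<le> (case x of (t, q) \<Rightarrow> dPdq t q)"
  proof eventually_elim
    case (elim x)
    obtain t q where x: "x = (t, q)" and t: "t \<ge> 0" and q: "q < 0"
      using elim(1) by (cases x) (auto simp: D1_def)
    with N elim(2) show ?case
      using dPdq_ge_if_Zsum_ge [OF t q, of N] by simp
  qed
qed

theorem proposition5p2:
  shows "(\<forall>t q. (t, q) \<in> D1 \<longrightarrow>
            ((\<lambda>q'. P t q') has_real_derivative (Zsum1 t q / Zsum t q)) (at q))
     \<and> (\<forall>t. 0 < t \<and> t \<le> 1 \<longrightarrow> filterlim (\<lambda>q. dPdq t q) at_top (at_left 0))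
     \<and> filterlim (\<lambda>(t, q). dPdq t q) at_top (at (0, 0) within D1)
     \<and> (\<forall>t q. (t, q) \<in> D1 \<longrightarrow> dPdq t q > 2)
     \<and> (\<forall>t. t \<ge> 0 \<longrightarrow> ((\<lambda>q. dPdq t q) \<longlongrightarrow> 2) at_bot)"
  using has_real_derivative_P filterlim_dPdq_at_left_0 filterlim_dPdq_at_origin dPdq_gt_2
    tendsto_dPdq_at_bot
  by (auto simp: D1_def Zsum1_eq_Zsum)

end
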